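(* Let $n\ge 3$ and consider the cycle graph on nodes $1,\dots,n$ with measurements $\widetilde{R}_{12},\dots,\widetilde{R}_{n-1,n},\widetilde{R}_{n1}\in\mathrm{SO}(3)$ that all lie in a common one-parameter subgroup of $\mathrm{SO}(3)$ (all are rotations about a common axis). Then the point $R^\ast=(R_1^\ast,\dots,R_n^\ast)$ with $R_1^\ast=I_3$ and $$R_i^\ast=\Big(\prod_{s=1}^{i-1}\widetilde{R}_{s,s+1}\Big)^{\top}E_0^{\,i-1},\qquad i\in\{2,\dots,n\},$$ (product from left to right) is a global minimizer of $f$ over $\mathrm{SO}(3)^n$.
   Context: Cycle-graph rotation averaging setup. Let $n\ge 3$. The cycle graph has nodes $1,\dots,n$ and edges $\{i,i+1\}$ for $i=1,\dots,n-1$ together with $\{n,1\}$; write $i\sim j$ if $\{i,j\}$ is an edge. Each edge carries a measured rotation $\widetilde{R}_{ij}\in\mathrm{SO}(3)$, with the convention $\widetilde{R}_{ji}=\widetilde{R}_{ij}^\top$. Define the symmetric $3n\times 3n$ block matrix $\widetilde{R}$ whose $(i,j)$ $3\times3$ block is $I_3$ if $i=j$, $\widetilde{R}_{ij}$ if $i\sim j$, and $0$ otherwise. For $R=(R_1,\dots,R_n)\in\mathrm{SO}(3)^n$, write $R=[R_1^\top\ \cdots\ R_n^\top]^\top\in\mathbb{R}^{3n\times 3}$ and define $f(R):=-\operatorname{Tr}(R^\top\widetilde{R}R)$; the rotation averaging problem is to minimize $f$ over $\mathrm{SO}(3)^n$. The cycle error is $E:=\widetilde{R}_{12}\widetilde{R}_{23}\cdots\widetilde{R}_{n-1,n}\widetilde{R}_{n1}\in\mathrm{SO}(3)$.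 Write $E=\exp(\gamma[\hat n]_\times)$ with unit axis $\hat n$ and angle $\gamma=\angle(E)\in[-\pi,\pi]$. For $k\in\{0,\dots,n-1\}$, $E_k:=\exp\big((\gamma/n-2k\pi/n)[\hat n]_\times\big)$; in particular $E_0=\exp((\gamma/n)[\hat n]_\times)$. *)

theory Defs
  imports "HOL-Analysis.Analysis"
begin

type_synonym mat3 = "real^3^3"

definition SO3 :: "mat3 set" where
  "SO3 = {A. orthogonal_matrix A \<and> det A = 1}"

primrec matpow :: "mat3 \<Rightarrow> nat \<Rightarrow> mat3" where
  "matpow A 0 = mat 1"
| "matpow A (Suc k) = A ** matpow A k"

definition mat_exp :: "mat3 \<Rightarrow> mat3" where
  "mat_exp A = (\<Sum>k. (1 / fact k) *\<^sub>R matpow A k)"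

definition skew :: "real^3 \<Rightarrow> mat3" where
  "skew u = vector [vector [0, - u$3, u$2],
                    vector [u$3, 0, - u$1],
                    vector [- u$2, u$1, 0]]"

text \<open>Measurements: meas i = R~_{i,i+1} for 1 <= i <= n-1, and meas n = R~_{n,1}.\<close>

definition cyc_adj :: "nat \<Rightarrow> nat \<Rightarrow> nat \<Rightarrow> bool" where
  "cyc_adj n i j \<longleftrightarrow> i \<in> {1..n} \<and> j \<in> {1..n} \<and>
     (j = i + 1 \<or> i = j + 1 \<or> (i = n \<and> j = 1) \<or> (i = 1 \<and> j = n))"

definition edge_meas :: "nat \<Rightarrow> (nat \<Rightarrow> mat3) \<Rightarrow> nat \<Rightarrow> nat \<Rightarrow> mat3" where
  "edge_meas n meas i j =
     (if i < n \<and> j = i + 1 then meas i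
      else if j < n \<and> i = j + 1 then transpose (meas j)
      else if i = n \<and> j = 1 then meas n
      else if i = 1 \<and> j = n then transpose (meas n)
      else 0)"

text \<open>The (i,j) 3x3 block of the 3n x 3n matrix R~.\<close>
definition Rtil_block :: "nat \<Rightarrow> (nat \<Rightarrow> mat3) \<Rightarrow> nat \<Rightarrow> nat \<Rightarrow> mat3" where
  "Rtil_block n meas i j =
     (if i = j then mat 1 else if cyc_adj n i j then edge_meas n meas i j else 0)"

text \<open>f(R) = - Tr(R^T R~ R), written blockwise.\<close>
definition cost :: "nat \<Rightarrow> (nat \<Rightarrow> mat3) \<Rightarrow> (nat \<Rightarrow> mat3) \<Rightarrow> real" where
  "cost n meas R =
     - (\<Sum>i\<in>{1..n}. \<Sum>j\<in>{1..n}. trace (transpose (R i) ** Rtil_block n meas i j ** R j))"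

definition lprod :: "(nat \<Rightarrow> mat3) \<Rightarrow> nat \<Rightarrow> mat3" where
  "lprod meas k = foldl (\<lambda>A s. A ** meas s) (mat 1) [1..<k]"

definition cycle_err :: "nat \<Rightarrow> (nat \<Rightarrow> mat3) \<Rightarrow> mat3" where
  "cycle_err n meas = lprod meas (n + 1)"

end

theory Submission
  imports Defs
begin

text \<open>
  For \<open>R \<in> SO(3)\<^sup>n\<close> let \<open>Q\<^sub>i = R\<^sub>i\<^sup>T R\<^sub>i\<^sub>,\<^sub>i\<^sub>+\<^sub>1 R\<^sub>i\<^sub>+\<^sub>1\<close> (indices modulo \<open>n\<close>) be the residual of edge \<open>i\<close>.
  Then \<open>f(R) = -(3n + 2 \<Sum> tr Q\<^sub>i)\<close>, and the residuals telescope: \<open>Q\<^sub>1 \<cdots> Q\<^sub>n = R\<^sub>1\<^sup>T E R\<^sub>1\<close>.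
  Writing \<open>\<theta>(Q) \<in> [0, \<pi>]\<close> for the rotation angle, \<open>tr Q = 1 + 2 cos \<theta>(Q)\<close> and \<open>\<theta>\<close> is
  subadditive (for half angles this is the triangle inequality for unit quaternions), so
  \<open>\<Sum> \<theta>(Q\<^sub>i) \<ge> \<theta>(E) = |\<gamma>|\<close>. Concavity of the cosine turns this into \<open>\<Sum> cos \<theta>(Q\<^sub>i) \<le> n cos(\<gamma>/n)\<close>,
  i.e. \<open>f(R) \<ge> -(3n + 2n(1 + 2 cos(\<gamma>/n)))\<close>, and \<open>R\<^sup>*\<close> attains the bound because each of its
  residuals equals \<open>E\<^sub>0\<close>.
\<close>

section \<open>Matrix algebra\<close>

lemma matrix_add_rdistrib: "(A + B) ** C = A ** C + B ** (C::'a::semiring_1^'p^'n)"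
  by (vector matrix_matrix_mult_def sum.distrib[symmetric] distrib_right)

lemma matrix_diff_ldistrib: "C ** (A - B) = C ** A - C ** (B::'a::ring_1^'p^'n)"
  by (vector matrix_matrix_mult_def sum_subtractf[symmetric] right_diff_distrib)

lemma matrix_diff_rdistrib: "(A - B) ** C = A ** C - B ** (C::'a::ring_1^'p^'n)"
  by (vector matrix_matrix_mult_def sum_subtractf[symmetric] left_diff_distrib)

lemma matrix_mul_lneg: "(- A) ** B = - (A ** (B::'a::ring_1^'p^'n))"
  by (vector matrix_matrix_mult_def sum_negf[symmetric])

lemma matrix_mul_rneg: "A ** (- B) = - (A ** (B::'a::ring_1^'p^'n))"
  by (vector matrix_matrix_mult_def sum_negf[symmetric])

lemma matrix_mul_scaleR_right: "A ** (k *\<^sub>R B) = k *\<^sub>R (A ** (B::real^'p^'n))"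
  by (simp add: matrix_scalar_ac scalar_matrix_assoc)

lemmas matrix_ring_simps = matrix_add_ldistrib matrix_add_rdistrib matrix_diff_ldistrib
  matrix_diff_rdistrib matrix_mul_lneg matrix_mul_rneg scalar_matrix_assoc[symmetric]
  matrix_mul_scaleR_right

lemma matrix_vector_mult_neg: "(- A) *v x = - (A *v (x::'a::ring_1^'n))"
  by (vector matrix_vector_mult_def sum_negf[symmetric])

lemma transpose_add: "transpose (A + B) = transpose A + transpose B"
  by (simp add: transpose_def vec_eq_iff)

lemma transpose_diff: "transpose (A - B) = transpose A - transpose (B::'a::ab_group_add^'n^'m)"
  by (simp add: transpose_def vec_eq_iff)

lemma trace_scaleR: "trace (k *\<^sub>R A) = k * trace (A::real^'n^'n)"
  by (simp add: trace_def sum_distrib_left)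

lemma trace_transpose: "trace (transpose A) = trace (A::'a::semiring_1^'n^'n)"
  by (simp add: trace_def transpose_def)

lemma det_neg_3: "det (- A) = - det (A::real^3^3)"
  by (simp add: det_3 algebra_simps)

lemma SO3_mult: "A \<in> SO3 \<Longrightarrow> B \<in> SO3 \<Longrightarrow> A ** B \<in> SO3"
  by (simp add: SO3_def orthogonal_matrix_mul det_mul)

lemma SO3_transpose: "A \<in> SO3 \<Longrightarrow> transpose A \<in> SO3"
  by (simp add: SO3_def)

lemma SO3_id: "mat 1 \<in> SO3"
  by (simp add: SO3_def orthogonal_matrix_id)

lemma SO3_transpose_mult: "A \<in> SO3 \<Longrightarrow> transpose A ** A = mat 1"
  by (simp add: SO3_def orthogonal_matrix_def)

lemma SO3_mult_transpose: "A \<in> SO3 \<Longrightarrow> X ** A ** transpose A = X"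
  by (simp add: SO3_def orthogonal_matrix_def flip: matrix_mul_assoc)

lemma SO3_inner: "A \<in> SO3 \<Longrightarrow> (A *v x) \<bullet> (A *v y) = x \<bullet> y"
  using orthogonal_transformation_matrix[of "(*v) A"]
  by (simp add: SO3_def orthogonal_transformation_def)

section \<open>Rodrigues' formula\<close>

lemma skew_mult_vector: "skew u *v x = cross3 u x"
  by (simp add: skew_def cross3_def matrix_vector_mult_def sum_3 vec_eq_iff forall_3 algebra_simps)

lemma skew_transpose: "transpose (skew u) = - skew u"
  by (simp add: skew_def transpose_def vec_eq_iff forall_3)

lemma skew_cube:
  assumes "norm u = 1"
  shows "skew u ** (skew u ** skew u) = - skew u"
proof -
  have "u \<bullet> u = 1" using assms by (simp add: dot_square_norm)
  then show ?thesis
    by (simp add: matrix_eq matrix_vector_mul_assoc[symmetric] skew_mult_vector Lagrange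
        matrix_vector_mult_neg cross_mult_right Cross3.right_diff_distrib dot_cross_self)
qed

definition rodrigues :: "real \<Rightarrow> real^3 \<Rightarrow> mat3" where
  "rodrigues a u = mat 1 + sin a *\<^sub>R skew u + (1 - cos a) *\<^sub>R (skew u ** skew u)"

lemma mult_quadratic_of_cube_eq_neg:
  fixes K :: "real^'n^'n"
  assumes K3: "K ** (K ** K) = - K"
  shows "(mat 1 + s1 *\<^sub>R K + t1 *\<^sub>R (K ** K)) ** (mat 1 + s2 *\<^sub>R K + t2 *\<^sub>R (K ** K))
   = mat 1 + (s1 + s2 - s1 * t2 - t1 * s2) *\<^sub>R K + (t1 + t2 + s1 * s2 - t1 * t2) *\<^sub>R (K ** K)"
proof -
  have "(K ** K) ** K = - K" using K3 by (simp add: matrix_mul_assoc)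
  moreover have "(K ** K) ** (K ** K) = - (K ** K)"
    by (metis K3 matrix_mul_assoc matrix_mul_rneg)
  ultimately show ?thesis
    by (simp add: matrix_ring_simps K3 algebra_simps)
qed

lemma rodrigues_mult: "norm u = 1 \<Longrightarrow> rodrigues a u ** rodrigues b u = rodrigues (a + b) u"
  unfolding rodrigues_def mult_quadratic_of_cube_eq_neg[OF skew_cube]
  by (simp add: sin_add cos_add algebra_simps)

lemma rodrigues_0: "rodrigues 0 u = mat 1"
  by (simp add: rodrigues_def)

lemma rodrigues_transpose: "transpose (rodrigues a u) = rodrigues (- a) u"
  by (simp add: rodrigues_def transpose_add transpose_scalar matrix_transpose_mul skew_transpose
      matrix_mul_lneg matrix_mul_rneg)

lemma matpow_rodrigues: "norm u = 1 \<Longrightarrow> matpow (rodrigues a u) k = rodrigues (real k * a) u"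
  by (induction k) (simp_all add: rodrigues_0 rodrigues_mult algebra_simps)

lemma rodrigues_mult_vector:
  "rodrigues a u *v x = x + sin a *\<^sub>R cross3 u x + (1 - cos a) *\<^sub>R cross3 u (cross3 u x)"
  by (simp add: rodrigues_def matrix_vector_mult_add_rdistrib scaleR_matrix_vector_assoc[symmetric]
      matrix_vector_mul_assoc[symmetric] skew_mult_vector)

lemma rodrigues_SO3:
  assumes u: "norm u = 1"
  shows "rodrigues a u \<in> SO3"
proof -
  have orth: "orthogonal_matrix (rodrigues b u)" for b
    unfolding orthogonal_matrix_def rodrigues_transpose rodrigues_mult[OF u] by (simp add: rodrigues_0)
  have "det (rodrigues a u) = (det (rodrigues (a/2) u))^2"
    by (metis det_mul field_sum_of_halves power2_eq_square rodrigues_mult[OF u])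
  then have "det (rodrigues a u) \<ge> 0" by simp
  then show ?thesis
    using det_orthogonal_matrix[OF orth, of a] by (auto simp: SO3_def orth)
qed

lemma matpow_scaleR: "matpow (t *\<^sub>R A) k = t ^ k *\<^sub>R matpow A k"
  by (induction k) (simp_all add: matrix_ring_simps)

lemma matpow_skew:
  assumes u: "norm u = 1"
  shows "matpow (skew u) k = (if k = 0 then mat 1 else
     (fact k * sin_coeff k) *\<^sub>R skew u - (fact k * cos_coeff k) *\<^sub>R (skew u ** skew u))"
proof (induction k)
  case (Suc k)
  have s: "fact (Suc k) * sin_coeff (Suc k) = fact k * cos_coeff k"
    by (simp add: sin_coeff_Suc field_simps)
  have c: "fact (Suc k) * cos_coeff (Suc k) = - (fact k * sin_coeff k)"
    by (simp add: cos_coeff_Suc field_simps)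
  show ?case
  proof (cases "k = 0")
    case False
    then show ?thesis using Suc.IH
      by (simp only: matpow.simps s c) (simp add: matrix_ring_simps skew_cube[OF u] algebra_simps)
  qed (simp add: sin_coeff_def cos_coeff_def)
qed simp

lemma mat_exp_skew:
  assumes u: "norm u = 1"
  shows "mat_exp (t *\<^sub>R skew u) = rodrigues t u"
proof -
  let ?K = "skew u" and ?\<delta> = "\<lambda>k. if k = 0 then 1 else 0 :: real"
  have series_term: "(1 / fact k) *\<^sub>R matpow (t *\<^sub>R ?K) k =
     ?\<delta> k *\<^sub>R mat 1 + (sin_coeff k * t ^ k) *\<^sub>R ?K + (?\<delta> k - cos_coeff k * t ^ k) *\<^sub>R (?K ** ?K)" for k
    by (simp add: matpow_scaleR matpow_skew[OF u] sin_coeff_def cos_coeff_def algebra_simps)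
  have \<delta>: "?\<delta> sums 1"
    using sums_single[of 0 "\<lambda>_. 1::real"] by simp
  have "(\<lambda>k. (?\<delta> k - cos_coeff k * t ^ k)) sums (1 - cos t)"
    using sums_diff[OF \<delta> cos_converges[of t]] by simp
  then have "(\<lambda>k. (1 / fact k) *\<^sub>R matpow (t *\<^sub>R ?K) k) sums rodrigues t u"
    unfolding series_term rodrigues_def
    using sums_add[OF sums_add[OF sums_scaleR_left[OF \<delta>] sums_scaleR_left[OF sin_converges]]
        sums_scaleR_left] by simp
  then show ?thesis unfolding mat_exp_def by (simp add: sums_unique[symmetric])
qed

section \<open>Axis--angle form of rotations\<close>

lemma SO3_has_fixed_axis:
  assumes "A \<in> SO3"
  obtains u where "norm u = 1" "A *v u = u"
proof -
  have oA: "orthogonal_matrix A" and dA: "det A = 1" using assms by (auto simp: SO3_def)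
  have "det (A - mat 1) = det (A ** (mat 1 - transpose A))"
    using oA by (simp add: matrix_ring_simps orthogonal_matrix_def)
  also have "\<dots> = det (transpose (mat 1 - A))" by (simp add: det_mul dA transpose_diff)
  also have "\<dots> = - det (A - mat 1)" using det_neg_3[of "A - mat 1"] by simp
  finally have sing: "det (A - mat 1) = 0" by simp
  obtain x where x: "(A - mat 1) *v x = 0" "x \<noteq> 0"
  proof (rule ccontr)
    assume "\<not> thesis"
    then have "\<forall>x. (A - mat 1) *v x = 0 \<longrightarrow> x = 0" using that by blast
    then obtain B where "B ** (A - mat 1) = mat 1"
      using matrix_left_invertible_ker by blast
    then have "det B * det (A - mat 1) = 1" by (metis det_I det_mul)
    then show False using sing by simp
  qed
  have "A *v ((1 / norm x) *\<^sub>R x) = (1 / norm x) *\<^sub>R x"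
    using x(1) by (simp add: matrix_vector_mult_scaleR matrix_vector_mult_diff_rdistrib)
  then show ?thesis by (rule that[rotated]) (simp add: x(2))
qed

lemma unit_orthogonal_exists:
  assumes "norm u = 1"
  obtains v :: "real^3" where "norm v = 1" "u \<bullet> v = 0"
proof -
  obtain e where e: "cross3 u e \<noteq> 0" using assms cross_basis_nonzero[of u] by force
  show ?thesis
    by (rule that[of "(1 / norm (cross3 u e)) *\<^sub>R cross3 u e"]) (use e in \<open>simp_all add: dot_cross_self\<close>)
qed

lemma orthonormal_frame_expansion:
  fixes u v x :: "real^3"
  assumes uu: "u \<bullet> u = 1" and vv: "v \<bullet> v = 1" and uv: "u \<bullet> v = 0"
  defines "w \<equiv> cross3 u v"
  shows "x = (u \<bullet> x) *\<^sub>R u + (v \<bullet> x) *\<^sub>R v + (w \<bullet> x) *\<^sub>R w"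
proof -
  have ww: "w \<bullet> w = 1" using norm_cross_dot[of u v] uu uv vv
    by (simp add: w_def power_mult_distrib power2_norm_eq_inner)
  have uw: "u \<bullet> w = 0" and vw: "v \<bullet> w = 0" by (simp_all add: w_def dot_cross_self)
  define y where "y = x - ((u \<bullet> x) *\<^sub>R u + (v \<bullet> x) *\<^sub>R v + (w \<bullet> x) *\<^sub>R w)"
  have "u \<bullet> y = 0" by (simp add: y_def inner_diff_right inner_add_right uu uv uw)
  moreover have "v \<bullet> y = 0"
    by (simp add: y_def inner_diff_right inner_add_right vv vw inner_commute[of v u] uv)
  moreover have yw: "w \<bullet> y = 0"
    by (simp add: y_def inner_diff_right inner_add_right ww inner_commute[of w u] inner_commute[of w v] uw vw)
  \<comment> \<open>Orthogonal to \<open>u\<close> and \<open>v\<close>, the vector \<open>y\<close> is parallel to \<open>w\<close>; orthogonal to \<open>w\<close> too, it vanishes.\<close>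
  ultimately have "cross3 y w = 0" unfolding w_def by (simp add: Lagrange inner_commute)
  then have "cross3 w y = 0" by (metis cross_skew neg_0_equal_iff_equal)
  then have "y = 0" using norm_cross_dot[of w y] yw ww by auto
  then show ?thesis by (simp add: y_def)
qed

lemma SO3_eq_rodrigues:
  assumes A: "A \<in> SO3"
  obtains a u where "norm u = 1" "A = rodrigues a u"
proof -
  obtain u where u1: "norm u = 1" and Au: "A *v u = u" using SO3_has_fixed_axis[OF A] by blast
  obtain v where v1: "norm v = 1" and uv: "u \<bullet> v = 0" using unit_orthogonal_exists[OF u1] by blast
  have uu: "u \<bullet> u = 1" and vv: "v \<bullet> v = 1" using u1 v1 by (simp_all add: dot_square_norm)
  define w where "w = cross3 u v"
  note expand = orthonormal_frame_expansion[OF uu vv uv, folded w_def]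
  have ww: "w \<bullet> w = 1" and vw: "v \<bullet> w = 0"
    using norm_cross_dot[of u v] u1 v1 uv by (simp_all add: w_def dot_cross_self power2_norm_eq_inner)
  have uxw: "cross3 u w = - v" by (simp add: w_def Lagrange uv uu)
  have uxuxw: "cross3 u (cross3 u w) = - w" by (simp only: uxw cross_minus_right) (simp add: w_def)
  define c where "c = v \<bullet> (A *v v)"
  define s where "s = w \<bullet> (A *v v)"
  have "u \<bullet> (A *v v) = 0" using SO3_inner[OF A, of u v] Au uv by simp
  then have Av: "A *v v = c *\<^sub>R v + s *\<^sub>R w"
    using expand[of "A *v v"] by (simp add: c_def s_def)
  have "(A *v v) \<bullet> (A *v v) = 1" using SO3_inner[OF A, of v v] vv by simp
  then have "c^2 + s^2 = 1"
    unfolding Av by (simp add: inner_add_left inner_add_right vv ww vw inner_commute power2_eq_square)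
  then obtain a where ca: "c = cos a" and sa: "s = sin a" using sincos_total_2pi by metis
  have rot: "rotation_matrix A" using A by (simp add: SO3_def rotation_matrix_def)
  have Aw: "A *v w = c *\<^sub>R w - s *\<^sub>R v"
    using cross_rotation_matrix[OF rot, of u v]
    by (simp add: w_def[symmetric] Au Av cross_add_right cross_mult_right uxw)
  have on_frame: "A *v b = rodrigues a u *v b" if "b \<in> {u, v, w}" for b
    using that by (auto simp: rodrigues_mult_vector Au Av Aw ca sa uxw uxuxw
        w_def[symmetric] algebra_simps)
  have "A *v x = rodrigues a u *v x" for x
    by (subst (1 2) expand[of x])
      (simp add: matrix_vector_right_distrib matrix_vector_mult_scaleR on_frame)
  then show ?thesis using that u1 matrix_eq by blast
qed

section \<open>The rotation angle\<close>

lemma trace_skew: "trace (skew u) = 0"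
  by (simp add: trace_def sum_3 skew_def)

lemma trace_skew_mult_skew: "trace (skew u ** skew v) = - 2 * (u \<bullet> v)"
  by (simp add: trace_def sum_3 skew_def matrix_matrix_mult_def inner_vec_def)

lemma trace_skew_mult_skew_sq: "trace (skew u ** (skew v ** skew v)) = 0"
  by (simp add: trace_def sum_3 skew_def matrix_matrix_mult_def)

lemma trace_skew_sq_mult_skew: "trace (skew u ** skew u ** skew v) = 0"
  by (simp add: trace_def sum_3 skew_def matrix_matrix_mult_def)

lemma trace_skew_sq_mult_skew_sq:
  "trace (skew u ** skew u ** (skew v ** skew v)) = (u \<bullet> v)^2 + (u \<bullet> u) * (v \<bullet> v)"
  by (simp add: trace_def sum_3 skew_def matrix_matrix_mult_def inner_vec_def) algebra

lemma trace_rodrigues: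
  assumes "norm u = 1"
  shows "trace (rodrigues a u) = 1 + 2 * cos a"
proof -
  have "u \<bullet> u = 1" using assms by (simp add: dot_square_norm)
  then show ?thesis
    by (simp add: rodrigues_def trace_add trace_scaleR trace_skew trace_skew_mult_skew trace_I)
qed

lemma trace_rodrigues_mult:
  assumes u: "norm u = 1" and v: "norm v = 1"
  shows "trace (rodrigues a u ** rodrigues b v) = 3 - 2 * (1 - cos a) - 2 * (1 - cos b)
     - 2 * sin a * sin b * (u \<bullet> v) + (1 - cos a) * (1 - cos b) * ((u \<bullet> v)^2 + 1)"
proof -
  have uu: "u \<bullet> u = 1" and vv: "v \<bullet> v = 1" using u v by (simp_all add: dot_square_norm)
  show ?thesis
    unfolding rodrigues_def
    by (simp only: matrix_ring_simps matrix_mul_lid matrix_mul_rid trace_add trace_scaleR trace_I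
        trace_skew trace_skew_mult_skew trace_skew_mult_skew_sq trace_skew_sq_mult_skew
        trace_skew_sq_mult_skew_sq uu vv) (simp add: algebra_simps)
qed

text \<open>In half angles this is the scalar part of a product of unit quaternions.\<close>

lemma trace_rodrigues_mult_half_angles:
  assumes "norm u = 1" "norm v = 1"
  shows "1 + trace (rodrigues (2*x) u ** rodrigues (2*y) v)
     = 4 * (cos x * cos y - sin x * sin y * (u \<bullet> v))^2"
proof -
  have "(cos x)^2 = 1 - (sin x)^2" "(cos y)^2 = 1 - (sin y)^2"
    by (simp_all add: cos_squared_eq)
  then show ?thesis
    unfolding trace_rodrigues_mult[OF assms] sin_double cos_double_sin by algebra
qed

lemma arccos_abs_cos_mult_diff_le:
  fixes x y d :: real
  assumes d: "\<bar>d\<bar> \<le> 1"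
  shows "arccos \<bar>cos x * cos y - sin x * sin y * d\<bar> \<le> arccos \<bar>cos x\<bar> + arccos \<bar>cos y\<bar>"
proof -
  define p where "p = arccos \<bar>cos x\<bar>"
  define q where "q = arccos \<bar>cos y\<bar>"
  have pq: "0 \<le> p" "p \<le> pi/2" "0 \<le> q" "q \<le> pi/2" unfolding p_def q_def
    using arccos_le_pi2 arccos_lbound by auto
  have cp: "cos p = \<bar>cos x\<bar>" and sp: "sin p = \<bar>sin x\<bar>"
   and cq: "cos q = \<bar>cos y\<bar>" and sq: "sin q = \<bar>sin y\<bar>"
    unfolding p_def q_def by (simp_all add: sin_arccos_abs sin_squared_eq[symmetric])
  define t where "t = cos x * cos y - sin x * sin y * d"
  have dd: "\<bar>sin x * sin y * d\<bar> \<le> \<bar>sin x\<bar> * \<bar>sin y\<bar>"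
    using d by (simp add: abs_mult mult_left_le)
  have "\<bar>cos x * cos y\<bar> - \<bar>sin x * sin y * d\<bar> \<le> \<bar>t\<bar>"
    unfolding t_def by (rule abs_triangle_ineq2)
  then have lo: "cos (p + q) \<le> \<bar>t\<bar>" using dd by (simp add: cos_add cp cq sp sq abs_mult)
  have "\<bar>t\<bar> \<le> \<bar>cos x * cos y\<bar> + \<bar>sin x * sin y * d\<bar>"
    unfolding t_def by (rule abs_triangle_ineq4)
  then have "\<bar>t\<bar> \<le> cos (p - q)" using dd by (simp add: cos_diff cp cq sp sq abs_mult)
  then have hi: "\<bar>t\<bar> \<le> 1" using cos_le_one[of "p - q"] by linarith
  have "arccos \<bar>t\<bar> \<le> arccos (cos (p + q))"
    by (rule arccos_le_arccos) (use lo hi in auto)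
  also have "\<dots> = p + q" using pq by (intro arccos_cos) auto
  finally show ?thesis by (simp add: t_def p_def q_def)
qed

text \<open>For a rotation by the angle \<open>a\<close>, \<open>(1 + trace Q) / 4 = cos\<^sup>2 (a / 2)\<close>; so this is half of
  the rotation angle normalised to \<open>[0, \<pi>]\<close>.\<close>

definition half_angle :: "mat3 \<Rightarrow> real" where
  "half_angle Q = arccos (sqrt ((1 + trace Q) / 4))"

lemma half_angle_rodrigues:
  assumes "norm u = 1"
  shows "half_angle (rodrigues (2*x) u) = arccos \<bar>cos x\<bar>"
proof -
  have "(1 + trace (rodrigues (2*x) u)) / 4 = (cos x)^2"
    by (simp add: trace_rodrigues[OF assms] cos_double_cos)
  then show ?thesis by (simp add: half_angle_def)
qed

lemma half_angle_rodrigues_abs: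
  assumes "norm u = 1" "- pi \<le> g" "g \<le> pi"
  shows "half_angle (rodrigues g u) = \<bar>g\<bar> / 2"
proof -
  have "cos (g/2) \<ge> 0" using assms by (intro cos_ge_zero) auto
  moreover have "cos (\<bar>g\<bar>/2) = cos (g/2)" by (cases "g \<ge> 0") auto
  ultimately have "half_angle (rodrigues g u) = arccos (cos (\<bar>g\<bar>/2))"
    using half_angle_rodrigues[OF assms(1), of "g/2"] by simp
  also have "\<dots> = \<bar>g\<bar>/2" using assms by (intro arccos_cos) auto
  finally show ?thesis .
qed

lemma half_angle_SO3:
  assumes "Q \<in> SO3"
  shows "0 \<le> half_angle Q" "half_angle Q \<le> pi/2" "trace Q = 1 + 2 * cos (2 * half_angle Q)"
proof -
  obtain x u where u: "norm u = 1" and Q: "Q = rodrigues (2 * x) u"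
    using SO3_eq_rodrigues[OF assms] by (metis field_sum_of_halves mult_2)
  have h: "half_angle Q = arccos \<bar>cos x\<bar>" using Q half_angle_rodrigues[OF u] by simp
  show "0 \<le> half_angle Q" "half_angle Q \<le> pi/2" unfolding h
    using arccos_le_pi2 arccos_lbound by auto
  show "trace Q = 1 + 2 * cos (2 * half_angle Q)"
    unfolding h by (simp add: Q trace_rodrigues[OF u] cos_double_cos)
qed

lemma half_angle_mult_le:
  assumes "A \<in> SO3" "B \<in> SO3"
  shows "half_angle (A ** B) \<le> half_angle A + half_angle B"
proof -
  obtain x y u v where u: "norm u = 1" and v: "norm v = 1"
    and A: "A = rodrigues (2 * x) u" and B: "B = rodrigues (2 * y) v"
    using SO3_eq_rodrigues[OF assms(1)] SO3_eq_rodrigues[OF assms(2)]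
    by (metis field_sum_of_halves mult_2)
  have "half_angle (A ** B) = arccos \<bar>cos x * cos y - sin x * sin y * (u \<bullet> v)\<bar>"
    unfolding half_angle_def A B trace_rodrigues_mult_half_angles[OF u v] by simp
  also have "\<dots> \<le> arccos \<bar>cos x\<bar> + arccos \<bar>cos y\<bar>"
    using Cauchy_Schwarz_ineq2[of u v] u v by (intro arccos_abs_cos_mult_diff_le) simp
  also have "\<dots> = half_angle A + half_angle B"
    by (simp add: A B half_angle_rodrigues u v)
  finally show ?thesis .
qed

lemma half_angle_id: "half_angle (mat 1) = 0"
  by (simp add: half_angle_def trace_I)

lemma half_angle_conj:
  assumes "R \<in> SO3"
  shows "half_angle (transpose R ** E ** R) = half_angle E"
proof -
  have "trace (transpose R ** E ** R) = trace (R ** (transpose R ** E))"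
    by (rule trace_mul_sym)
  also have "\<dots> = trace E"
    using assms by (simp add: matrix_mul_assoc SO3_def orthogonal_matrix_def)
  finally show ?thesis by (simp add: half_angle_def)
qed

section \<open>A cosine inequality\<close>

lemma concave_on_cos: "concave_on {0..pi/2} cos"
proof (rule f''_le0_imp_concave[where f' = "\<lambda>x. - sin x" and f'' = "\<lambda>x. - cos x"])
  show "\<And>x. ((\<lambda>x. - sin x) has_real_derivative - cos x) (at x)"
    by (auto intro!: derivative_eq_intros)
qed (auto intro!: DERIV_cos cos_ge_zero)

lemma sum_cos_le_of_le_pi_half:
  assumes "finite I" "I \<noteq> {}" "\<And>i. i \<in> I \<Longrightarrow> 0 \<le> \<psi> i \<and> \<psi> i \<le> pi/2"
  shows "(\<Sum>i\<in>I. cos (\<psi> i)) \<le> card I * cos ((\<Sum>i\<in>I. \<psi> i) / card I)"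
proof -
  have c: "card I > 0" using assms by (simp add: card_gt_0_iff)
  have "(\<Sum>i\<in>I. (1 / card I) * cos (\<psi> i)) \<le> cos (\<Sum>i\<in>I. (1 / card I) *\<^sub>R \<psi> i)"
    by (rule concave_on_sum[OF assms(1,2) concave_on_cos]) (use c assms(3) in auto)
  then have "(1 / card I) * (\<Sum>i\<in>I. cos (\<psi> i)) \<le> cos ((\<Sum>i\<in>I. \<psi> i) / card I)"
    by (simp add: sum_distrib_left[symmetric] sum_divide_distrib[symmetric])
  then show ?thesis using c by (simp add: field_simps)
qed

lemma cos_add_cos_le_two_cos_mean:
  assumes "0 \<le> a + b" "a + b \<le> pi"
  shows "cos a + cos b \<le> 2 * cos ((a + b) / 2)"
proof -
  have "cos a + cos b = 2 * cos ((a + b) / 2) * cos ((a - b) / 2)"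
    by (simp add: cos_plus_cos)
  moreover have "cos ((a + b) / 2) \<ge> 0" using assms by (intro cos_ge_zero) auto
  ultimately show ?thesis using cos_le_one[of "(a - b) / 2"] by (simp add: mult_left_le)
qed

lemma add_le_sum_nonneg:
  fixes \<psi> :: "'a \<Rightarrow> real"
  assumes "finite I" "i \<in> I" "k \<in> I" "i \<noteq> k" "\<And>i. i \<in> I \<Longrightarrow> 0 \<le> \<psi> i"
  shows "\<psi> i + \<psi> k \<le> (\<Sum>i\<in>I. \<psi> i)"
  using sum_mono2[of I "{i, k}" \<psi>] assms by auto

text \<open>Jensen's inequality needs all angles in \<open>[0, \<pi>/2]\<close>. When their sum is at most \<open>\<pi>\<close>,
  at most one angle exceeds \<open>\<pi>/2\<close>, and replacing it and one other angle by their mean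
  preserves the sum, does not decrease the cosine sum, and brings all angles into range.\<close>

lemma sum_cos_le_of_sum_le_pi:
  fixes \<psi> :: "'a \<Rightarrow> real"
  assumes I: "finite I" "card I \<ge> 2" and nn: "\<And>i. i \<in> I \<Longrightarrow> 0 \<le> \<psi> i"
    and S: "(\<Sum>i\<in>I. \<psi> i) \<le> pi"
  shows "(\<Sum>i\<in>I. cos (\<psi> i)) \<le> card I * cos ((\<Sum>i\<in>I. \<psi> i) / card I)"
proof (cases "\<forall>i\<in>I. \<psi> i \<le> pi/2")
  case True
  then show ?thesis using I nn by (intro sum_cos_le_of_le_pi_half) auto
next
  case False
  then obtain k where k: "k \<in> I" "\<psi> k > pi/2" by auto
  have "card (I - {k}) \<ge> 1" using I k by (simp add: card_Diff_singleton)
  then have "I - {k} \<noteq> {}" by (metis card.empty not_one_le_zero)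
  then obtain j where j: "j \<in> I" "j \<noteq> k" by blast
  define m where "m = (\<psi> k + \<psi> j) / 2"
  define \<psi>' where "\<psi>' = \<psi>(k := m, j := m)"
  have jk: "\<psi> j + \<psi> k \<le> (\<Sum>i\<in>I. \<psi> i)" by (rule add_le_sum_nonneg) (use I j k nn in auto)
  have split: "sum f I = f j + f k + sum f (I - {j, k})" for f :: "'a \<Rightarrow> real"
    using I(1) j k by (simp add: sum.remove[of I j] sum.remove[of "I - {j}" k] Diff_insert2[symmetric]
        insert_commute)
  have rest: "(\<Sum>i\<in>I - {j, k}. f (\<psi>' i)) = (\<Sum>i\<in>I - {j, k}. f (\<psi> i))" for f
    by (rule sum.cong) (auto simp: \<psi>'_def)
  have sum': "(\<Sum>i\<in>I. \<psi>' i) = (\<Sum>i\<in>I. \<psi> i)"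
    using split[of \<psi>'] split[of \<psi>] rest[of "\<lambda>x. x"] j by (simp add: \<psi>'_def m_def)
  have m: "0 \<le> m" "m \<le> pi/2" using jk S nn j k by (auto simp: m_def)
  have "(\<Sum>i\<in>I. cos (\<psi> i)) \<le> (\<Sum>i\<in>I. cos (\<psi>' i))"
    using split[of "\<lambda>i. cos (\<psi>' i)"] split[of "\<lambda>i. cos (\<psi> i)"] rest[of cos]
      cos_add_cos_le_two_cos_mean[of "\<psi> k" "\<psi> j"] m j nn[OF j(1)] nn[OF k(1)]
    by (simp add: \<psi>'_def m_def add.commute)
  also have "\<dots> \<le> card I * cos ((\<Sum>i\<in>I. \<psi>' i) / card I)"
  proof (rule sum_cos_le_of_le_pi_half[OF I(1)])
    show "I \<noteq> {}" using k by auto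
    fix i assume i: "i \<in> I"
    show "0 \<le> \<psi>' i \<and> \<psi>' i \<le> pi / 2"
    proof (cases "i = k \<or> i = j")
      case True
      then show ?thesis using m by (auto simp: \<psi>'_def)
    next
      case False
      have "\<psi> i + \<psi> k \<le> (\<Sum>i\<in>I. \<psi> i)" by (rule add_le_sum_nonneg) (use I i k nn False in auto)
      then show ?thesis using False nn[OF i] S k by (auto simp: \<psi>'_def)
    qed
  qed
  finally show ?thesis unfolding sum' .
qed

lemma sum_cos_le_of_le_sum:
  fixes \<phi> :: "'a \<Rightarrow> real"
  assumes I: "finite I" "card I \<ge> 2" and \<phi>: "\<And>i. i \<in> I \<Longrightarrow> 0 \<le> \<phi> i \<and> \<phi> i \<le> pi"
    and g: "0 \<le> g" "g \<le> pi" "g \<le> (\<Sum>i\<in>I. \<phi> i)"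
  shows "(\<Sum>i\<in>I. cos (\<phi> i)) \<le> card I * cos (g / card I)"
proof (cases "(\<Sum>i\<in>I. \<phi> i) = 0")
  case True
  then have "\<forall>i\<in>I. \<phi> i = 0" using sum_nonneg_eq_0_iff[OF I(1)] \<phi> by blast
  moreover have "g = 0" using g True by linarith
  ultimately show ?thesis by simp
next
  case False
  \<comment> \<open>Shrink all angles by the common factor \<open>r\<close> so that they sum to \<open>g\<close>; cosine decreases on \<open>[0, \<pi>]\<close>.\<close>
  define r where "r = g / (\<Sum>i\<in>I. \<phi> i)"
  have pos: "(\<Sum>i\<in>I. \<phi> i) > 0" using False sum_nonneg[of I \<phi>] \<phi> by (metis less_eq_real_def)
  then have r: "0 \<le> r" "r \<le> 1" using g by (auto simp: r_def)
  have "(\<Sum>i\<in>I. \<phi> i * r) = (\<Sum>i\<in>I. \<phi> i) * r" by (rule sum_distrib_right[symmetric])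
  then have sum_r: "(\<Sum>i\<in>I. \<phi> i * r) = g" using pos by (simp add: r_def)
  have "(\<Sum>i\<in>I. cos (\<phi> i)) \<le> (\<Sum>i\<in>I. cos (\<phi> i * r))"
  proof (rule sum_mono)
    fix i assume "i \<in> I"
    then show "cos (\<phi> i) \<le> cos (\<phi> i * r)"
      using \<phi> r by (intro cos_monotone_0_pi_le) (auto simp: mult_left_le)
  qed
  also have "\<dots> \<le> card I * cos (g / card I)"
    using sum_cos_le_of_sum_le_pi[OF I, of "\<lambda>i. \<phi> i * r"] \<phi> r sum_r g by simp
  finally show ?thesis .
qed

section \<open>The cycle\<close>

lemma lprod_1: "lprod f (Suc 0) = mat 1"
  by (simp add: lprod_def)

lemma lprod_Suc: "1 \<le> k \<Longrightarrow> lprod f (Suc k) = lprod f k ** f k"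
  by (simp add: lprod_def)

lemma lprod_SO3: "(\<And>i. 1 \<le> i \<Longrightarrow> i < k \<Longrightarrow> f i \<in> SO3) \<Longrightarrow> lprod f k \<in> SO3"
proof (induction k)
  case (Suc k)
  then show ?case by (cases "k = 0") (simp_all add: lprod_1 lprod_Suc SO3_id SO3_mult)
qed (simp add: lprod_def SO3_id)

lemma half_angle_lprod_le:
  "(\<And>i. 1 \<le> i \<Longrightarrow> i < k \<Longrightarrow> f i \<in> SO3) \<Longrightarrow>
   half_angle (lprod f k) \<le> (\<Sum>i\<in>{1..<k}. half_angle (f i))"
proof (induction k)
  case (Suc k)
  show ?case
  proof (cases "k = 0")
    case False
    have "half_angle (lprod f (Suc k)) \<le> half_angle (lprod f k) + half_angle (f k)"
      using False Suc.prems by (simp add: lprod_Suc half_angle_mult_le lprod_SO3)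
    also have "\<dots> \<le> (\<Sum>i\<in>{1..<Suc k}. half_angle (f i))" using False Suc by simp
    finally show ?thesis .
  qed (simp add: lprod_1 half_angle_id)
qed (simp add: lprod_def half_angle_id)

definition cyc_next :: "nat \<Rightarrow> nat \<Rightarrow> nat" where
  "cyc_next n i = (if i = n then 1 else Suc i)"

definition cyc_prev :: "nat \<Rightarrow> nat \<Rightarrow> nat" where
  "cyc_prev n i = (if i = 1 then n else i - 1)"

lemma cyc_next_prev:
  assumes "n \<ge> 3" "i \<in> {1..n}"
  shows "cyc_next n i \<in> {1..n}" "cyc_prev n i \<in> {1..n}" "cyc_next n i \<noteq> i" "cyc_prev n i \<noteq> i"
    "cyc_next n i \<noteq> cyc_prev n i" "cyc_next n (cyc_prev n i) = i" "cyc_prev n (cyc_next n i) = i"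
  using assms by (auto simp: cyc_next_def cyc_prev_def)

lemma Rtil_block_other:
  assumes "n \<ge> 3" "i \<in> {1..n}" "j \<noteq> i" "j \<noteq> cyc_next n i" "j \<noteq> cyc_prev n i"
  shows "Rtil_block n meas i j = 0"
  using assms by (auto simp: Rtil_block_def cyc_adj_def cyc_next_def cyc_prev_def split: if_splits)

lemma Rtil_block_next:
  "n \<ge> 3 \<Longrightarrow> i \<in> {1..n} \<Longrightarrow> Rtil_block n meas i (cyc_next n i) = meas i"
  by (auto simp: Rtil_block_def cyc_adj_def cyc_next_def edge_meas_def)

lemma Rtil_block_prev:
  "n \<ge> 3 \<Longrightarrow> i \<in> {1..n} \<Longrightarrow> Rtil_block n meas i (cyc_prev n i) = transpose (meas (cyc_prev n i))"
  by (auto simp: Rtil_block_def cyc_adj_def cyc_prev_def edge_meas_def)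

definition edge_residual :: "nat \<Rightarrow> (nat \<Rightarrow> mat3) \<Rightarrow> (nat \<Rightarrow> mat3) \<Rightarrow> nat \<Rightarrow> mat3" where
  "edge_residual n meas R i = transpose (R i) ** meas i ** R (cyc_next n i)"

lemma trace_transpose_mult3:
  "trace (transpose A ** transpose M ** B) = trace (transpose B ** M ** (A::'a::comm_semiring_1^'n^'n))"
  by (metis matrix_transpose_mul matrix_mul_assoc transpose_transpose trace_transpose)

lemma cost_eq_sum_trace_edge_residual:
  assumes n: "n \<ge> 3" and R: "\<forall>i\<in>{1..n}. R i \<in> SO3"
  shows "cost n meas R = - (3 * n + 2 * (\<Sum>i\<in>{1..n}. trace (edge_residual n meas R i)))"
proof -
  define G where "G i = trace (edge_residual n meas R i)" for i
  define F where "F i j = trace (transpose (R i) ** Rtil_block n meas i j ** R j)" for i j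
  have row: "(\<Sum>j\<in>{1..n}. F i j) = 3 + G i + G (cyc_prev n i)" if i: "i \<in> {1..n}" for i
  proof -
    note c = cyc_next_prev[OF n i]
    have "(\<Sum>j\<in>{1..n}. F i j) = (\<Sum>j\<in>{i, cyc_next n i, cyc_prev n i}. F i j)"
      by (rule sum.mono_neutral_right) (use c i n in \<open>auto simp: F_def Rtil_block_other trace_def\<close>)
    also have "\<dots> = F i i + F i (cyc_next n i) + F i (cyc_prev n i)"
      using c by simp
    also have "F i i = 3" using R i by (simp add: F_def Rtil_block_def SO3_transpose_mult trace_I)
    also have "F i (cyc_next n i) = G i"
      by (simp add: F_def G_def edge_residual_def Rtil_block_next[OF n i])
    also have "F i (cyc_prev n i) = G (cyc_prev n i)"
      by (simp add: F_def G_def edge_residual_def Rtil_block_prev[OF n i] trace_transpose_mult3 c(6))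
    finally show ?thesis .
  qed
  have "(\<Sum>i\<in>{1..n}. G (cyc_prev n i)) = (\<Sum>i\<in>{1..n}. G i)"
    by (rule sum.reindex_bij_witness[where i = "cyc_next n" and j = "cyc_prev n"])
      (use cyc_next_prev[OF n] in auto)
  moreover have "cost n meas R = - (\<Sum>i\<in>{1..n}. 3 + G i + G (cyc_prev n i))"
    unfolding cost_def F_def[symmetric] by (intro arg_cong[where f = uminus] sum.cong refl row)
  ultimately show ?thesis by (simp add: sum.distrib G_def)
qed

lemma lprod_edge_residual:
  assumes n: "n \<ge> 3" and R: "\<forall>i\<in>{1..n}. R i \<in> SO3"
  shows "lprod (edge_residual n meas R) (Suc n) = transpose (R 1) ** cycle_err n meas ** R 1"
proof -
  let ?Q = "edge_residual n meas R"
  have partial: "lprod ?Q k = transpose (R 1) ** lprod meas k ** R k" if "1 \<le> k" "k \<le> n" for k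
    using that
  proof (induction k)
    case (Suc k)
    show ?case
    proof (cases "k = 0")
      case False
      have IH: "lprod ?Q k = transpose (R 1) ** lprod meas k ** R k" using Suc False by simp
      have "lprod ?Q (Suc k) = lprod ?Q k ** ?Q k" using False by (simp add: lprod_Suc)
      also have "\<dots> = transpose (R 1) ** lprod meas k ** (R k ** transpose (R k)) ** meas k ** R (Suc k)"
        unfolding IH using Suc.prems by (simp add: edge_residual_def cyc_next_def matrix_mul_assoc)
      also have "\<dots> = transpose (R 1) ** lprod meas (Suc k) ** R (Suc k)"
        using False Suc.prems R by (simp add: lprod_Suc SO3_def orthogonal_matrix_def matrix_mul_assoc)
      finally show ?thesis .
    qed (use R n in \<open>simp add: lprod_1 SO3_transpose_mult\<close>)
  qed simp
  have Rn: "R n \<in> SO3" using R n by auto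
  have "lprod ?Q (Suc n) = lprod ?Q n ** ?Q n" using n by (simp add: lprod_Suc)
  also have "\<dots> = transpose (R 1) ** (lprod meas n ** meas n) ** R 1"
    using n by (simp add: partial edge_residual_def cyc_next_def matrix_mul_assoc SO3_mult_transpose[OF Rn])
  also have "lprod meas n ** meas n = cycle_err n meas"
    using n by (simp add: cycle_err_def lprod_Suc)
  finally show ?thesis .
qed

lemma sum_trace_edge_residual_le:
  assumes n: "n \<ge> 3" and R: "\<forall>i\<in>{1..n}. R i \<in> SO3" and M: "\<forall>i\<in>{1..n}. meas i \<in> SO3"
    and E: "cycle_err n meas = rodrigues \<gamma> v" "norm v = 1" "- pi \<le> \<gamma>" "\<gamma> \<le> pi"
  shows "(\<Sum>i\<in>{1..n}. trace (edge_residual n meas R i)) \<le> n * (1 + 2 * cos (\<gamma> / n))"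
proof -
  let ?Q = "edge_residual n meas R"
  have Q: "?Q i \<in> SO3" if "i \<in> {1..n}" for i
    using that R M cyc_next_prev(1)[OF n that]
    by (auto simp: edge_residual_def intro!: SO3_mult SO3_transpose)
  have "\<bar>\<gamma>\<bar> / 2 = half_angle (transpose (R 1) ** rodrigues \<gamma> v ** R 1)"
    using R n E by (simp add: half_angle_conj half_angle_rodrigues_abs)
  also have "\<dots> \<le> (\<Sum>i\<in>{1..n}. half_angle (?Q i))"
    using half_angle_lprod_le[of "Suc n" ?Q] Q
    by (simp add: lprod_edge_residual[OF n R] E atLeastLessThanSuc_atLeastAtMost)
  finally have "\<bar>\<gamma>\<bar> \<le> (\<Sum>i\<in>{1..n}. 2 * half_angle (?Q i))"
    by (simp add: sum_distrib_left[symmetric])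
  then have "(\<Sum>i\<in>{1..n}. cos (2 * half_angle (?Q i))) \<le> n * cos (\<bar>\<gamma>\<bar> / n)"
    using sum_cos_le_of_le_sum[of "{1..n}" "\<lambda>i. 2 * half_angle (?Q i)" "\<bar>\<gamma>\<bar>"]
      half_angle_SO3(1,2)[OF Q] n E by fastforce
  moreover have "(\<Sum>i\<in>{1..n}. trace (?Q i)) = n + 2 * (\<Sum>i\<in>{1..n}. cos (2 * half_angle (?Q i)))"
    by (simp add: half_angle_SO3(3)[OF Q] sum.distrib sum_distrib_left)
  moreover have "cos (\<bar>\<gamma>\<bar> / n) = cos (\<gamma> / n)"
    using cos_abs_real[of "\<gamma> / n"] by (simp add: abs_divide)
  ultimately show ?thesis by (simp add: algebra_simps)
qed

lemma edge_residual_eq_rodrigues: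
  assumes n: "n \<ge> 3" and v: "norm v = 1" and E: "cycle_err n meas = rodrigues \<gamma> v"
    and M: "\<forall>i\<in>{1..n}. meas i \<in> SO3"
    and R: "\<forall>i\<in>{1..n}. R i = transpose (lprod meas i) ** rodrigues (real (i - 1) * (\<gamma> / n)) v"
    and i: "i \<in> {1..n}"
  shows "edge_residual n meas R i = rodrigues (\<gamma> / n) v"
proof (cases "i = n")
  case True
  have "edge_residual n meas R i = rodrigues (- (real (n - 1) * (\<gamma> / n))) v ** cycle_err n meas"
    using True n R by (simp add: edge_residual_def cyc_next_def cycle_err_def lprod_1 lprod_Suc
        rodrigues_0 matrix_transpose_mul rodrigues_transpose matrix_mul_assoc)
  also have "\<dots> = rodrigues (\<gamma> / n) v"
    using n by (simp add: E rodrigues_mult[OF v] of_nat_diff field_simps)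
  finally show ?thesis .
next
  case False
  then have i: "1 \<le> i" "i < n" using i by auto
  have L: "lprod meas (Suc i) \<in> SO3" using M i by (intro lprod_SO3) auto
  have "edge_residual n meas R i = rodrigues (- (real (i - 1) * (\<gamma> / n))) v
      ** (lprod meas (Suc i) ** transpose (lprod meas (Suc i))) ** rodrigues (real i * (\<gamma> / n)) v"
    using i R by (simp add: edge_residual_def cyc_next_def lprod_Suc matrix_transpose_mul
        rodrigues_transpose matrix_mul_assoc)
  also have "\<dots> = rodrigues (- (real (i - 1) * (\<gamma> / n)) + real i * (\<gamma> / n)) v"
    using L by (simp add: SO3_def orthogonal_matrix_def rodrigues_mult[OF v])
  also have "- (real (i - 1) * (\<gamma> / n)) + real i * (\<gamma> / n) = \<gamma> / n"
    using i by (simp add: of_nat_diff algebra_simps diff_divide_distrib)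
  finally show ?thesis .
qed

lemma cost_of_edge_residual_eq:
  assumes n: "n \<ge> 3" and R: "\<forall>i\<in>{1..n}. R i \<in> SO3"
    and Q: "\<And>i. i \<in> {1..n} \<Longrightarrow> edge_residual n meas R i = rodrigues a v" and v: "norm v = 1"
  shows "cost n meas R = - (3 * real n + 2 * real n * (1 + 2 * cos a))"
  using Q by (simp add: cost_eq_sum_trace_edge_residual[OF n R] trace_rodrigues[OF v])

theorem theorem1:
  fixes n :: nat and meas :: "nat \<Rightarrow> real^3^3" and u :: "real^3"
    and \<theta> :: "nat \<Rightarrow> real" and nh :: "real^3" and \<gamma> :: real
  assumes n3: "n \<ge> 3"
    and meas_SO3: "\<forall>i\<in>{1..n}. meas i \<in> SO3"
    and common_axis: "norm u = 1" "\<forall>i\<in>{1..n}. meas i = mat_exp (\<theta> i *\<^sub>R skew u)"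
    and E_rep: "norm nh = 1" "-pi \<le> \<gamma>" "\<gamma> \<le> pi"
      "cycle_err n meas = mat_exp (\<gamma> *\<^sub>R skew nh)"
  shows "let E0 = mat_exp ((\<gamma> / real n) *\<^sub>R skew nh);
             Rstar = (\<lambda>i. if i = 1 then mat 1
                           else transpose (lprod meas i) ** matpow E0 (i - 1))
         in (\<forall>i\<in>{1..n}. Rstar i \<in> SO3) \<and>
            (\<forall>R. (\<forall>i\<in>{1..n}. R i \<in> SO3) \<longrightarrow> cost n meas Rstar \<le> cost n meas R)"
proof -
  define Rstar where "Rstar = (\<lambda>i. if i = 1 then mat 1
    else transpose (lprod meas i) ** matpow (mat_exp ((\<gamma> / real n) *\<^sub>R skew nh)) (i - 1))"
  have E: "cycle_err n meas = rodrigues \<gamma> nh"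
    using E_rep by (simp add: mat_exp_skew)
  have Rstar: "\<forall>i\<in>{1..n}. Rstar i = transpose (lprod meas i) ** rodrigues (real (i - 1) * (\<gamma> / n)) nh"
    using E_rep by (simp add: Rstar_def mat_exp_skew matpow_rodrigues lprod_1 rodrigues_0)
  have Rstar_SO3: "\<forall>i\<in>{1..n}. Rstar i \<in> SO3"
    using Rstar meas_SO3 E_rep by (auto intro!: SO3_mult SO3_transpose lprod_SO3 rodrigues_SO3)
  have "cost n meas Rstar = - (3 * real n + 2 * real n * (1 + 2 * cos (\<gamma> / n)))"
    by (rule cost_of_edge_residual_eq[OF n3 Rstar_SO3
          edge_residual_eq_rodrigues[OF n3 E_rep(1) E meas_SO3 Rstar] E_rep(1)])
  moreover have "cost n meas R \<ge> - (3 * real n + 2 * real n * (1 + 2 * cos (\<gamma> / n)))"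
    if "\<forall>i\<in>{1..n}. R i \<in> SO3" for R
    using sum_trace_edge_residual_le[OF n3 that meas_SO3 E E_rep(1-3)]
    by (simp add: cost_eq_sum_trace_edge_residual[OF n3 that])
  ultimately have "(\<forall>i\<in>{1..n}. Rstar i \<in> SO3) \<and>
      (\<forall>R. (\<forall>i\<in>{1..n}. R i \<in> SO3) \<longrightarrow> cost n meas Rstar \<le> cost n meas R)"
    using Rstar_SO3 by auto
  then show ?thesis unfolding Let_def Rstar_def .
qed

end
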